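(* (i) Let $G=(V,E)$ be a complete graph on $n\ge 2$ vertices with distinct positive edge weights, and let $k\in\{1,\dots,n-1\}$. Then the graph $(V,M_k(G))$ is $k$-constructible. (ii) Let $G=(V,E)$ be a $k$-constructible graph. Then there exist distinct positive edge weights on the complete graph $\widetilde G=(V,\widetilde E)$ on vertex set $V$ such that $E\subseteq M_k(\widetilde G)$.
   Context: For a complete graph $H=(V,F)$ on $n$ vertices with distinct positive edge weights and $k\in\{1,\dots,n-1\}$, $M_k(H)=\bigcup_{X\subseteq V,\,|X|=k-1}\mathrm{MST}(H[V\setminus X])$, where $H[V\setminus X]$ is the induced weighted subgraph and $\mathrm{MST}$ denotes the edge set of its (unique) minimum spanning tree. A graph $G=(V,E)$ is called $k$-constructible if there is an ordering $e_1,\dots,e_m$ of $E$ such that for every $i\in\{1,\dots,m\}$ the graph $(V,\{e_1,\dots,e_{i-1}\})$ contains at most $k-1$ internally vertex-disjoint paths between the two endpoints of $e_i$. *)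

theory Defs
  imports Complex_Main
begin

definition all_edges :: "'a set \<Rightarrow> 'a set set" where
  "all_edges U = {e. e \<subseteq> U \<and> card e = 2}"

definition adj :: "'a set set \<Rightarrow> 'a \<Rightarrow> 'a \<Rightarrow> bool" where
  "adj F x y \<longleftrightarrow> x \<noteq> y \<and> {x, y} \<in> F"

definition connected_graph :: "'a set \<Rightarrow> 'a set set \<Rightarrow> bool" where
  "connected_graph U F \<longleftrightarrow> (\<forall>x\<in>U. \<forall>y\<in>U. (adj F)\<^sup>*\<^sup>* x y)"

text \<open>A spanning tree of the complete graph on U: a connected spanning subgraph
  that is acyclic, i.e. no edge lies on a cycle (removing any edge disconnects it).\<close>
definition spanning_tree :: "'a set \<Rightarrow> 'a set set \<Rightarrow> bool" where
  "spanning_tree U T \<longleftrightarrow> T \<subseteq> all_edges U \<and> connected_graph U T \<and>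
     (\<forall>e\<in>T. \<not> connected_graph U (T - {e}))"

definition is_mst :: "('a set \<Rightarrow> real) \<Rightarrow> 'a set \<Rightarrow> 'a set set \<Rightarrow> bool" where
  "is_mst w U T \<longleftrightarrow> spanning_tree U T \<and>
     (\<forall>T'. spanning_tree U T' \<longrightarrow> sum w T \<le> sum w T')"

text \<open>The (unique, for distinct weights) minimum spanning tree of the induced
  weighted subgraph H[U].\<close>
definition MST :: "('a set \<Rightarrow> real) \<Rightarrow> 'a set \<Rightarrow> 'a set set" where
  "MST w U = (THE T. is_mst w U T)"

definition M :: "nat \<Rightarrow> 'a set \<Rightarrow> ('a set \<Rightarrow> real) \<Rightarrow> 'a set set" where
  "M k V w = (\<Union>X \<in> {X. X \<subseteq> V \<and> card X = k - 1}. MST w (V - X))"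

definition distinct_pos_weights :: "'a set \<Rightarrow> ('a set \<Rightarrow> real) \<Rightarrow> bool" where
  "distinct_pos_weights V w \<longleftrightarrow> inj_on w (all_edges V) \<and> (\<forall>e\<in>all_edges V. 0 < w e)"

definition is_path :: "'a set set \<Rightarrow> 'a \<Rightarrow> 'a \<Rightarrow> 'a list \<Rightarrow> bool" where
  "is_path F u v p \<longleftrightarrow> length p \<ge> 2 \<and> hd p = u \<and> last p = v \<and> distinct p \<and>
     (\<forall>i. Suc i < length p \<longrightarrow> {p ! i, p ! Suc i} \<in> F)"

definition internal :: "'a list \<Rightarrow> 'a set" where
  "internal p = set (butlast (tl p))"

definition int_disjoint_paths :: "'a set set \<Rightarrow> 'a \<Rightarrow> 'a \<Rightarrow> 'a list set \<Rightarrow> bool" where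
  "int_disjoint_paths F u v P \<longleftrightarrow> (\<forall>p\<in>P. is_path F u v p) \<and>
     (\<forall>p\<in>P. \<forall>q\<in>P. p \<noteq> q \<longrightarrow> internal p \<inter> internal q = {})"

definition at_most_disjoint_paths :: "'a set set \<Rightarrow> 'a \<Rightarrow> 'a \<Rightarrow> nat \<Rightarrow> bool" where
  "at_most_disjoint_paths F u v m \<longleftrightarrow>
     (\<forall>P. finite P \<and> int_disjoint_paths F u v P \<longrightarrow> card P \<le> m)"

definition k_constructible :: "nat \<Rightarrow> 'a set \<Rightarrow> 'a set set \<Rightarrow> bool" where
  "k_constructible k V E \<longleftrightarrow> (\<exists>es. distinct es \<and> set es = E \<and>
     (\<forall>i < length es. \<forall>u v. es ! i = {u, v} \<and> u \<noteq> v \<longrightarrow>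
        at_most_disjoint_paths (set (take i es)) u v (k - 1)))"

end

theory Submission
  imports Defs
begin

text \<open>
  (i) An edge \<open>{u, v}\<close> of \<open>MST(V - X)\<close> with \<open>|X| = k - 1\<close> has no path of lighter edges inside
  \<open>V - X\<close> (the cycle property of minimum spanning trees), whereas among any \<open>k\<close> internally disjoint
  \<open>u\<close>-\<open>v\<close> paths one avoids \<open>X\<close>.  So adding the edges of \<open>M\<^sub>k\<close> in order of increasing weight
  shows that \<open>M\<^sub>k\<close> is \<open>k\<close>-constructible.

  (ii) Give the edges of a \<open>k\<close>-constructible graph their construction order as weights and all
  other pairs larger weights.  When \<open>e\<^sub>i = {u, v}\<close> is added, there are at most \<open>k - 1\<close> disjoint
  \<open>u\<close>-\<open>v\<close> paths among the earlier (that is, lighter) edges, so by Menger's theorem some \<open>k - 1\<close>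
  vertices \<open>X\<close> separate \<open>u\<close> from \<open>v\<close> in them.  Then \<open>e\<^sub>i\<close> is the lightest edge between the two
  sides in \<open>V - X\<close>, hence an edge of \<open>MST(V - X)\<close>.
\<close>

section \<open>Walks in edge sets\<close>

lemma adj_sym: "adj F x y \<Longrightarrow> adj F y x"
  by (auto simp: adj_def insert_commute)

lemma adj_mono: "F \<subseteq> G \<Longrightarrow> adj F x y \<Longrightarrow> adj G x y"
  by (auto simp: adj_def)

lemma adj_rtranclp_sym: "(adj F)\<^sup>*\<^sup>* x y \<Longrightarrow> (adj F)\<^sup>*\<^sup>* y x"
  by (induction rule: rtranclp_induct) (auto intro: converse_rtranclp_into_rtranclp adj_sym)

lemma adj_rtranclp_mono: "F \<subseteq> G \<Longrightarrow> (adj F)\<^sup>*\<^sup>* x y \<Longrightarrow> (adj G)\<^sup>*\<^sup>* x y"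
  by (metis adj_mono mono_rtranclp)

lemma rtranclp_lift:
  assumes "\<And>x y. R x y \<Longrightarrow> S\<^sup>*\<^sup>* x y" and "R\<^sup>*\<^sup>* a b"
  shows "S\<^sup>*\<^sup>* a b"
  using assms(2) by (induction rule: rtranclp_induct) (auto intro: rtranclp_trans assms(1))

lemma rtranclp_crossing_step:
  assumes "R\<^sup>*\<^sup>* a b" "P a" "\<not> P b"
  shows "\<exists>x y. R x y \<and> P x \<and> \<not> P y"
  using assms by (induction rule: rtranclp_induct) auto

lemma adj_rtranclp_insert_edge:
  assumes "(adj (insert {x, y} G))\<^sup>*\<^sup>* a b"
  shows "(adj G)\<^sup>*\<^sup>* a b \<or> ((adj G)\<^sup>*\<^sup>* a x \<and> (adj G)\<^sup>*\<^sup>* y b) \<or> ((adj G)\<^sup>*\<^sup>* a y \<and> (adj G)\<^sup>*\<^sup>* x b)"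
  using assms
proof (induction rule: rtranclp_induct)
  case (step t t')
  show ?case
  proof (cases "adj G t t'")
    case True
    with step.IH show ?thesis by (meson rtranclp.rtrancl_into_rtrancl)
  next
    case False
    with step.hyps(2) have "(t = x \<and> t' = y) \<or> (t = y \<and> t' = x)"
      by (auto simp: adj_def doubleton_eq_iff)
    with step.IH show ?thesis by auto
  qed
qed simp

lemma adj_rtranclp_exchange:
  assumes "(adj (insert {a, b} G))\<^sup>*\<^sup>* u v" "\<not> (adj G)\<^sup>*\<^sup>* u v"
  shows "(adj (insert {u, v} G))\<^sup>*\<^sup>* a b"
proof -
  let ?R = "(adj (insert {u, v} G))\<^sup>*\<^sup>*"
  have "u \<noteq> v" using assms(2) by auto
  hence uv: "?R u v" "?R v u" by (auto simp: adj_def insert_commute intro: r_into_rtranclp)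
  have lift: "?R p q" if "(adj G)\<^sup>*\<^sup>* p q" for p q
    using that by (rule adj_rtranclp_mono[rotated]) blast
  from adj_rtranclp_insert_edge[OF assms(1)] assms(2) show ?thesis
    by (elim disjE conjE; simp)
      (meson adj_rtranclp_sym lift rtranclp_trans uv)+
qed

lemma finite_all_edges: "finite U \<Longrightarrow> finite (all_edges U)"
  by (rule finite_subset[of _ "Pow U"]) (auto simp: all_edges_def)

lemma all_edges_mono: "U \<subseteq> U' \<Longrightarrow> all_edges U \<subseteq> all_edges U'"
  by (auto simp: all_edges_def)

lemma all_edgesE:
  assumes "e \<in> all_edges U"
  obtains a b where "a \<noteq> b" "e = {a, b}" "a \<in> U" "b \<in> U"
  using assms by (auto simp: all_edges_def card_2_iff)

lemma doubleton_in_all_edges: "a \<noteq> b \<Longrightarrow> a \<in> U \<Longrightarrow> b \<in> U \<Longrightarrow> {a, b} \<in> all_edges U"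
  by (auto simp: all_edges_def)

lemma connected_graph_mono: "connected_graph U F \<Longrightarrow> F \<subseteq> G \<Longrightarrow> connected_graph U G"
  by (auto simp: connected_graph_def intro: adj_rtranclp_mono)

lemma connected_graph_replace_edge:
  assumes "connected_graph U T" "T - {{a, b}} \<subseteq> S" "(adj S)\<^sup>*\<^sup>* a b"
  shows "connected_graph U S"
proof -
  have "(adj S)\<^sup>*\<^sup>* x y" if "adj T x y" for x y
  proof (cases "{x, y} = {a, b}")
    case True
    hence "(x = a \<and> y = b) \<or> (x = b \<and> y = a)" by (simp add: doubleton_eq_iff)
    with assms(3) show ?thesis by (auto intro: adj_rtranclp_sym)
  next
    case False
    with that assms(2) have "adj S x y" by (auto simp: adj_def)
    thus ?thesis by blast
  qed
  with assms(1) show ?thesis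
    unfolding connected_graph_def by (blast intro: rtranclp_lift)
qed

lemma connected_graph_has_spanning_tree:
  assumes "finite U" "F \<subseteq> all_edges U" "connected_graph U F"
  shows "\<exists>T \<subseteq> F. spanning_tree U T"
  using assms(2,3)
proof (induction "card F" arbitrary: F rule: less_induct)
  case less
  have "finite F" using less.prems(1) finite_all_edges[OF assms(1)] finite_subset by blast
  show ?case
  proof (cases "\<exists>e\<in>F. connected_graph U (F - {e})")
    case True
    then obtain e where "e \<in> F" "connected_graph U (F - {e})" by blast
    with \<open>finite F\<close> less show ?thesis by (meson Diff_subset card_Diff1_less order_trans)
  next
    case False
    with less.prems show ?thesis by (auto simp: spanning_tree_def)
  qed
qed

lemma spanning_tree_edge_is_bridge:
  assumes "spanning_tree U T" "{a, b} \<in> T"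
  shows "\<not> (adj (T - {{a, b}}))\<^sup>*\<^sup>* a b"
  using assms connected_graph_replace_edge[of U T a b "T - {{a, b}}"]
  unfolding spanning_tree_def by blast

section \<open>Minimum spanning trees with distinct weights\<close>

definition lighter_edges :: "('a set \<Rightarrow> real) \<Rightarrow> 'a set \<Rightarrow> 'a set \<Rightarrow> 'a set set" where
  "lighter_edges w U e = {f \<in> all_edges U. w f < w e}"

definition kruskal_edges :: "('a set \<Rightarrow> real) \<Rightarrow> 'a set \<Rightarrow> 'a set set" where
  "kruskal_edges w U =
     {e \<in> all_edges U. \<forall>a b. e = {a, b} \<longrightarrow> \<not> (adj (lighter_edges w U e))\<^sup>*\<^sup>* a b}"

lemma kruskal_edgesD:
  "{a, b} \<in> kruskal_edges w U \<Longrightarrow> \<not> (adj (lighter_edges w U {a, b}))\<^sup>*\<^sup>* a b"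
  unfolding kruskal_edges_def by blast

lemma kruskal_edges_subset: "kruskal_edges w U \<subseteq> all_edges U"
  by (auto simp: kruskal_edges_def)

locale distinct_weights =
  fixes w :: "'a set \<Rightarrow> real" and U :: "'a set"
  assumes finite_U: "finite U" and inj_w: "inj_on w (all_edges U)"
    and pos_w: "\<And>e. e \<in> all_edges U \<Longrightarrow> 0 < w e"
begin

lemma kruskal_edges_connect_edge:
  assumes "{a, b} \<in> all_edges U"
  shows "(adj (kruskal_edges w U))\<^sup>*\<^sup>* a b"
  using assms
proof (induction "card (lighter_edges w U {a, b})" arbitrary: a b rule: less_induct)
  case less
  let ?K = "kruskal_edges w U" and ?L = "lighter_edges w U {a, b}"
  show ?case
  proof (cases "{a, b} \<in> ?K")
    case True
    moreover have "a \<noteq> b" using less.prems by (auto simp: all_edges_def)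
    ultimately show ?thesis by (auto simp: adj_def)
  next
    case False
    then obtain a' b' where ab': "{a, b} = {a', b'}" "(adj ?L)\<^sup>*\<^sup>* a' b'"
      using less.prems by (auto simp: kruskal_edges_def)
    have "(adj ?K)\<^sup>*\<^sup>* x y" if "adj ?L x y" for x y
    proof -
      from that have xy: "{x, y} \<in> all_edges U" "w {x, y} < w {a, b}"
        by (auto simp: adj_def lighter_edges_def)
      have "lighter_edges w U {x, y} \<subset> ?L"
        using xy by (auto simp: lighter_edges_def)
      moreover have "finite ?L"
        using finite_all_edges[OF finite_U] by (auto simp: lighter_edges_def)
      ultimately have "card (lighter_edges w U {x, y}) < card ?L" by (meson psubset_card_mono)
      from less.hyps[OF this xy(1)] show ?thesis .
    qed
    hence "(adj ?K)\<^sup>*\<^sup>* a' b'" using ab'(2) by (rule rtranclp_lift)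
    moreover have "(a = a' \<and> b = b') \<or> (a = b' \<and> b = a')" using ab'(1) by (simp add: doubleton_eq_iff)
    ultimately show ?thesis by (auto intro: adj_rtranclp_sym)
  qed
qed

lemma connected_graph_kruskal_edges: "connected_graph U (kruskal_edges w U)"
  unfolding connected_graph_def
proof (intro ballI)
  fix x y assume "x \<in> U" "y \<in> U"
  thus "(adj (kruskal_edges w U))\<^sup>*\<^sup>* x y"
    by (cases "x = y") (auto intro: kruskal_edges_connect_edge doubleton_in_all_edges)
qed

text \<open>Induction over the subsets of the other Kruskal edges, adding them in order of weight:
  the heaviest edge \<open>f = {a, b}\<close> of a set joining \<open>u\<close> and \<open>v\<close> could be exchanged for \<open>{u, v}\<close>;
  both orders of \<open>w f\<close> and \<open>w {u, v}\<close> then contradict the definition.\<close>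
lemma kruskal_edges_remove_disconnects:
  assumes e: "{u, v} \<in> kruskal_edges w U"
  shows "\<not> (adj (kruskal_edges w U - {{u, v}}))\<^sup>*\<^sup>* u v"
proof -
  let ?K = "kruskal_edges w U" and ?e = "{u, v}"
  have eU: "?e \<in> all_edges U" using e kruskal_edges_subset by blast
  have finK: "finite (?K - {?e})"
    using finite_all_edges[OF finite_U] kruskal_edges_subset finite_subset by blast
  have "\<not> (adj A)\<^sup>*\<^sup>* u v" if "A \<subseteq> ?K - {?e}" for A
    using finite_subset[OF that finK] that
  proof (induction A rule: finite_ranking_induct[where f = w])
    case empty
    have "u \<noteq> v" using eU by (auto simp: all_edges_def)
    thus ?case by (auto simp: adj_def elim: converse_rtranclpE)
  next
    case (insert f A)
    have fK: "f \<in> ?K" and AK: "A \<subseteq> ?K - {?e}" and fe: "f \<noteq> ?e" using insert.prems by auto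
    then obtain a b where ab: "f = {a, b}" using kruskal_edges_subset all_edgesE by blast
    have fU: "f \<in> all_edges U" using fK kruskal_edges_subset by blast
    have AU: "A \<subseteq> all_edges U" using AK kruskal_edges_subset by blast
    show ?case
    proof
      assume uv: "(adj (insert f A))\<^sup>*\<^sup>* u v"
      have "w f \<noteq> w ?e" using fe inj_w fU eU by (meson inj_on_contraD)
      then consider "w f < w ?e" | "w ?e < w f" by linarith
      thus False
      proof cases
        case 1
        with insert.hyps(2) AU fU have "insert f A \<subseteq> lighter_edges w U ?e"
          by (force simp: lighter_edges_def)
        with uv e show False by (meson adj_rtranclp_mono kruskal_edgesD)
      next
        case 2
        have "f \<notin> A" using insert.IH AK uv by (metis insert_absorb)
        hence "w g < w f" if "g \<in> A" for g
          using insert.hyps(2)[OF that] inj_w fU AU that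
          by (metis inj_on_contraD order_le_neq_trans subsetD)
        hence "insert ?e A \<subseteq> lighter_edges w U f"
          using 2 AU eU by (auto simp: lighter_edges_def)
        moreover have "(adj (insert ?e A))\<^sup>*\<^sup>* a b"
          using adj_rtranclp_exchange uv insert.IH AK ab by metis
        ultimately show False using fK ab by (meson adj_rtranclp_mono kruskal_edgesD)
      qed
    qed
  qed
  thus ?thesis by blast
qed

lemma spanning_tree_kruskal_edges: "spanning_tree U (kruskal_edges w U)"
  unfolding spanning_tree_def
proof (intro conjI ballI notI)
  show "kruskal_edges w U \<subseteq> all_edges U" by (rule kruskal_edges_subset)
  show "connected_graph U (kruskal_edges w U)" by (rule connected_graph_kruskal_edges)
  fix e assume e: "e \<in> kruskal_edges w U" and con: "connected_graph U (kruskal_edges w U - {e})"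
  obtain u v where uv: "e = {u, v}" "u \<in> U" "v \<in> U"
    using e kruskal_edges_subset all_edgesE by blast
  have "(adj (kruskal_edges w U - {e}))\<^sup>*\<^sup>* u v"
    using con uv(2,3) unfolding connected_graph_def by blast
  thus False using kruskal_edges_remove_disconnects e unfolding uv(1) by blast
qed

lemma mst_exchange:
  assumes "is_mst w U T" "e \<in> T" "f \<in> all_edges U" "f \<notin> T" "w f < w e"
  shows "\<not> connected_graph U (insert f (T - {e}))"
proof
  let ?T' = "insert f (T - {e})"
  assume con: "connected_graph U ?T'"
  have T'U: "?T' \<subseteq> all_edges U"
    using assms(1,3) unfolding is_mst_def spanning_tree_def by blast
  obtain T'' where T'': "T'' \<subseteq> ?T'" "spanning_tree U T''"
    using connected_graph_has_spanning_tree[OF finite_U T'U con] by blast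
  have finT': "finite ?T'" by (rule finite_subset[OF T'U finite_all_edges[OF finite_U]])
  have "sum w T'' \<le> sum w ?T'"
  proof (rule sum_mono2[OF finT' T''(1)])
    show "0 \<le> w g" if "g \<in> ?T' - T''" for g using that T'U pos_w by (meson DiffD1 less_imp_le subsetD)
  qed
  also have "\<dots> = w f + sum w (T - {e})" using finT' assms(4) by simp
  also have "\<dots> < w e + sum w (T - {e})" using assms(5) by simp
  also have "\<dots> = sum w T" using finT' assms(2) by (simp add: sum.remove)
  finally have "sum w T'' < sum w T" .
  thus False using assms(1) T''(2) unfolding is_mst_def by (meson not_le)
qed

text \<open>The cycle property: a lighter edge joining the two sides of \<open>T - {e}\<close> could replace \<open>e\<close>.\<close>
lemma mst_subset_kruskal_edges:
  assumes mst: "is_mst w U T"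
  shows "T \<subseteq> kruskal_edges w U"
proof
  fix e assume eT: "e \<in> T"
  have st: "spanning_tree U T" using mst by (simp add: is_mst_def)
  hence "e \<in> all_edges U" using eT by (auto simp: spanning_tree_def)
  show "e \<in> kruskal_edges w U"
  proof (rule ccontr)
    assume "e \<notin> kruskal_edges w U"
    with \<open>e \<in> all_edges U\<close> obtain a b where ab: "e = {a, b}" "(adj (lighter_edges w U e))\<^sup>*\<^sup>* a b"
      unfolding kruskal_edges_def by blast
    let ?R = "(adj (T - {e}))\<^sup>*\<^sup>*"
    have sides: "?R a z \<or> ?R b z" if "z \<in> U" for z
    proof -
      have "a \<in> U" using \<open>e \<in> all_edges U\<close> ab(1) by (auto simp: all_edges_def)
      with st that have "(adj (insert {a, b} (T - {e})))\<^sup>*\<^sup>* a z"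
        using eT ab(1) by (auto simp: spanning_tree_def connected_graph_def insert_absorb)
      from adj_rtranclp_insert_edge[OF this] show ?thesis by blast
    qed
    have "\<not> ?R a b" using spanning_tree_edge_is_bridge[OF st] eT ab(1) by blast
    then obtain x y where xy: "adj (lighter_edges w U e) x y" "?R a x" "\<not> ?R a y"
      using rtranclp_crossing_step[OF ab(2), of "?R a"] by blast
    have f: "{x, y} \<in> all_edges U" "w {x, y} < w e" "x \<noteq> y"
      using xy(1) by (auto simp: adj_def lighter_edges_def)
    have "y \<in> U" using f(1) by (auto simp: all_edges_def)
    hence "?R b y" using sides xy(3) by blast
    have "{x, y} \<notin> T"
    proof
      assume "{x, y} \<in> T"
      hence "adj (T - {e}) x y" using f by (auto simp: adj_def)
      thus False using xy(2,3) by (meson rtranclp.rtrancl_into_rtrancl)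
    qed
    let ?T' = "insert {x, y} (T - {e})"
    have "T - {e} \<subseteq> ?T'" by blast
    hence "(adj ?T')\<^sup>*\<^sup>* a x" "(adj ?T')\<^sup>*\<^sup>* b y"
      using xy(2) \<open>?R b y\<close> by (auto intro: adj_rtranclp_mono[OF \<open>T - {e} \<subseteq> ?T'\<close>])
    moreover have "adj ?T' x y" using f(3) by (simp add: adj_def)
    ultimately have ab': "(adj ?T')\<^sup>*\<^sup>* a b"
      by (meson adj_rtranclp_sym rtranclp.rtrancl_into_rtrancl rtranclp_trans)
    have "connected_graph U T" using st by (simp add: spanning_tree_def)
    moreover have "T - {{a, b}} \<subseteq> ?T'" using ab(1) by blast
    ultimately have "connected_graph U ?T'" using ab' by (rule connected_graph_replace_edge)
    thus False using mst_exchange[OF mst eT f(1) \<open>{x, y} \<notin> T\<close> f(2)] by blast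
  qed
qed

lemma mst_eq_kruskal_edges:
  assumes "is_mst w U T"
  shows "T = kruskal_edges w U"
proof (rule ccontr)
  assume "T \<noteq> kruskal_edges w U"
  with mst_subset_kruskal_edges[OF assms] obtain e where e: "e \<in> kruskal_edges w U" "T \<subseteq> kruskal_edges w U - {e}"
    by blast
  have "connected_graph U T" using assms by (simp add: is_mst_def spanning_tree_def)
  hence "connected_graph U (kruskal_edges w U - {e})" using e(2) by (rule connected_graph_mono)
  thus False using spanning_tree_kruskal_edges e(1) by (simp add: spanning_tree_def)
qed

lemma ex_mst: "\<exists>T. is_mst w U T"
proof -
  let ?S = "{T. spanning_tree U T}"
  have "finite ?S"
    by (rule finite_subset[of _ "Pow (all_edges U)"])
      (auto simp: spanning_tree_def finite_all_edges[OF finite_U])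
  moreover have "?S \<noteq> {}" using spanning_tree_kruskal_edges by blast
  ultimately show ?thesis unfolding is_mst_def
    by (metis (lifting) arg_min_if_finite mem_Collect_eq not_le)
qed

lemma MST_eq_kruskal_edges: "MST w U = kruskal_edges w U"
  unfolding MST_def using ex_mst mst_eq_kruskal_edges by (metis the_equality)

end

lemma distinct_weights_subset:
  assumes "finite V" "distinct_pos_weights V w" "U \<subseteq> V"
  shows "distinct_weights w U"
proof
  have "all_edges U \<subseteq> all_edges V" using assms(3) by (rule all_edges_mono)
  thus "inj_on w (all_edges U)" "\<And>e. e \<in> all_edges U \<Longrightarrow> 0 < w e"
    using assms(2) unfolding distinct_pos_weights_def by (auto intro: inj_on_subset)
  show "finite U" using assms(1,3) by (rule finite_subset[rotated])
qed

lemma MST_subset_all_edges: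
  assumes "finite V" "distinct_pos_weights V w" "U \<subseteq> V"
  shows "MST w U \<subseteq> all_edges V"
  using distinct_weights.MST_eq_kruskal_edges[OF distinct_weights_subset[OF assms]]
    kruskal_edges_subset all_edges_mono[OF assms(3)] by blast

section \<open>The edges of \<open>M\<^sub>k\<close> form a \<open>k\<close>-constructible graph\<close>

lemma M_subset_all_edges:
  assumes "finite V" "distinct_pos_weights V w"
  shows "M k V w \<subseteq> all_edges V"
  unfolding M_def using MST_subset_all_edges[OF assms] by blast

lemma is_path_set:
  assumes "is_path F u v p"
  shows "set p = insert u (insert v (internal p))"
proof -
  have ne: "p \<noteq> []" "tl p \<noteq> []" using assms by (cases p; auto simp: is_path_def)+
  hence "p = hd p # butlast (tl p) @ [last (tl p)]" by simp
  also have "last (tl p) = last p" using ne by (simp add: last_tl)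
  finally have "p = hd p # butlast (tl p) @ [last p]" .
  hence "set p = set (hd p # butlast (tl p) @ [last p])" by simp
  thus ?thesis using assms by (auto simp: is_path_def internal_def)
qed

lemma is_path_rtranclp:
  assumes "is_path F u v p" "\<And>i. Suc i < length p \<Longrightarrow> R (p ! i) (p ! Suc i)"
  shows "R\<^sup>*\<^sup>* u v"
proof -
  have ne: "p \<noteq> []" using assms(1) by (auto simp: is_path_def)
  have "R\<^sup>*\<^sup>* (p ! 0) (p ! j)" if "j < length p" for j
    using that by (induction j) (auto intro: rtranclp.rtrancl_into_rtrancl assms(2))
  hence "R\<^sup>*\<^sup>* (p ! 0) (p ! (length p - 1))" using ne by simp
  moreover have "p ! 0 = u" "p ! (length p - 1) = v"
    using assms(1) ne by (auto simp: is_path_def hd_conv_nth last_conv_nth)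
  ultimately show ?thesis by simp
qed

lemma pairwise_disjoint_avoids:
  assumes "finite X" "finite P" "\<And>p q. p \<in> P \<Longrightarrow> q \<in> P \<Longrightarrow> p \<noteq> q \<Longrightarrow> f p \<inter> f q = {}"
    and "card X < card P"
  shows "\<exists>p\<in>P. f p \<inter> X = {}"
proof (rule ccontr)
  assume "\<not> ?thesis"
  hence "\<forall>p\<in>P. \<exists>z. z \<in> f p \<inter> X" by blast
  then obtain g where g: "\<And>p. p \<in> P \<Longrightarrow> g p \<in> f p \<inter> X" by metis
  have "inj_on g P"
  proof (rule inj_onI)
    fix p q assume pq: "p \<in> P" "q \<in> P" "g p = g q"
    hence "f p \<inter> f q \<noteq> {}" using g[OF pq(1)] g[OF pq(2)] by auto
    thus "p = q" using assms(3)[OF pq(1,2)] by blast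
  qed
  moreover have "g ` P \<subseteq> X" using g by blast
  ultimately have "card P \<le> card X" using assms(1) by (rule card_inj_on_le)
  thus False using assms(4) by simp
qed

lemma M_edge_few_disjoint_lighter_paths:
  assumes finV: "finite V" and w: "distinct_pos_weights V w" and e: "{u, v} \<in> M k V w"
    and H: "\<And>f. f \<in> H \<Longrightarrow> f \<in> all_edges V \<and> w f < w {u, v}"
  shows "at_most_disjoint_paths H u v (k - 1)"
  unfolding at_most_disjoint_paths_def
proof (intro allI impI)
  obtain X where X: "X \<subseteq> V" "card X = k - 1" "{u, v} \<in> MST w (V - X)"
    using e unfolding M_def by blast
  interpret distinct_weights w "V - X" using distinct_weights_subset[OF finV w] by blast
  have eK: "{u, v} \<in> kruskal_edges w (V - X)" using X(3) MST_eq_kruskal_edges by simp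
  hence uvX: "u \<notin> X" "v \<notin> X" using kruskal_edges_subset by (auto simp: all_edges_def)
  fix P assume P: "finite P \<and> int_disjoint_paths H u v P"
  show "card P \<le> k - 1"
  proof (rule ccontr)
    assume "\<not> card P \<le> k - 1"
    moreover have "finite X" using X(1) finV by (rule finite_subset)
    ultimately have "\<exists>p\<in>P. internal p \<inter> X = {}"
      using P X(2) by (intro pairwise_disjoint_avoids) (auto simp: int_disjoint_paths_def)
    then obtain p where p: "p \<in> P" "internal p \<inter> X = {}" by blast
    have path: "is_path H u v p" using P p(1) unfolding int_disjoint_paths_def by blast
    have pX: "set p \<inter> X = {}" using is_path_set[OF path] p(2) uvX by auto
    have "adj (lighter_edges w (V - X) {u, v}) (p ! j) (p ! Suc j)" if j: "Suc j < length p" for j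
    proof -
      have f: "{p ! j, p ! Suc j} \<in> H" "p ! j \<noteq> p ! Suc j"
        using path j by (auto simp: is_path_def nth_eq_iff_index_eq)
      moreover have "p ! j \<in> set p" "p ! Suc j \<in> set p" using j by simp_all
      hence "p ! j \<notin> X" "p ! Suc j \<notin> X" using pX by blast+
      ultimately show ?thesis
        using H[OF f(1)] by (auto simp: adj_def lighter_edges_def all_edges_def)
    qed
    hence "(adj (lighter_edges w (V - X) {u, v}))\<^sup>*\<^sup>* u v" by (rule is_path_rtranclp[OF path])
    thus False using kruskal_edgesD[OF eK] by blast
  qed
qed

lemma sorted_enumeration:
  fixes w :: "'a \<Rightarrow> 'b :: linorder"
  assumes "finite E" "inj_on w E"
  obtains es where "distinct es" "set es = E" "sorted_wrt (\<lambda>e f. w e < w f) es"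
proof -
  obtain xs where xs: "distinct xs" "set xs = E" using finite_distinct_list[OF assms(1)] by blast
  let ?es = "sort_key w xs"
  have "distinct (map w ?es)"
    using xs assms(2) by (simp add: distinct_map)
  hence "sorted_wrt (<) (map w ?es)" using sorted_sort_key[of w xs] by (simp add: strict_sorted_iff)
  hence "sorted_wrt (\<lambda>e f. w e < w f) ?es" by (simp add: sorted_wrt_map)
  moreover have "distinct ?es" "set ?es = E" using xs by simp_all
  ultimately show ?thesis using that by blast
qed

theorem M_k_constructible:
  assumes finV: "finite V" and w: "distinct_pos_weights V w"
  shows "k_constructible k V (M k V w)"
proof -
  have MV: "M k V w \<subseteq> all_edges V" by (rule M_subset_all_edges[OF finV w])
  have "inj_on w (M k V w)"
    using w MV unfolding distinct_pos_weights_def by (blast intro: inj_on_subset)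
  moreover have "finite (M k V w)" using MV finite_all_edges[OF finV] by (rule finite_subset)
  ultimately obtain es where es: "distinct es" "set es = M k V w" "sorted_wrt (\<lambda>e f. w e < w f) es"
    using sorted_enumeration by blast
  have "at_most_disjoint_paths (set (take i es)) u v (k - 1)"
    if i: "i < length es" and uv: "es ! i = {u, v}" for i u v
  proof (rule M_edge_few_disjoint_lighter_paths[OF finV w])
    show "{u, v} \<in> M k V w" using es(2) i uv nth_mem by metis
    fix f assume "f \<in> set (take i es)"
    then obtain j where "j < i" "f = es ! j" by (auto simp: in_set_conv_nth)
    moreover have "es ! j \<in> M k V w" using es(2) nth_mem \<open>j < i\<close> i by (metis order.strict_trans)
    moreover have "w (es ! j) < w (es ! i)" using sorted_wrt_nth_less[OF es(3) \<open>j < i\<close> i] .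
    ultimately show "f \<in> all_edges V \<and> w f < w {u, v}" using MV uv by auto
  qed
  with es show ?thesis unfolding k_constructible_def by blast
qed

section \<open>Menger's theorem\<close>

definition edges_avoiding :: "'a set set \<Rightarrow> 'a set \<Rightarrow> 'a set set" where
  "edges_avoiding F Z = {f \<in> F. f \<inter> Z = {}}"

definition reach_avoiding :: "'a set set \<Rightarrow> 'a set \<Rightarrow> 'a \<Rightarrow> 'a \<Rightarrow> bool" where
  "reach_avoiding F Z a b \<longleftrightarrow> a \<notin> Z \<and> (adj (edges_avoiding F Z))\<^sup>*\<^sup>* a b"

definition separates :: "'a set set \<Rightarrow> 'a set \<Rightarrow> 'a set \<Rightarrow> 'a set \<Rightarrow> bool" where
  "separates F A B Z \<longleftrightarrow> (\<forall>a\<in>A. \<forall>b\<in>B. \<not> reach_avoiding F Z a b)"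

definition AB_path :: "'a set set \<Rightarrow> 'a set \<Rightarrow> 'a set \<Rightarrow> 'a list \<Rightarrow> bool" where
  "AB_path F A B p \<longleftrightarrow> p \<noteq> [] \<and> distinct p \<and> successively (adj F) p \<and> hd p \<in> A \<and> last p \<in> B \<and>
     (\<forall>z\<in>set p. z \<in> A \<longrightarrow> z = hd p) \<and> (\<forall>z\<in>set p. z \<in> B \<longrightarrow> z = last p)"

definition disjoint_AB_paths :: "'a set set \<Rightarrow> 'a set \<Rightarrow> 'a set \<Rightarrow> nat \<Rightarrow> 'a list set \<Rightarrow> bool" where
  "disjoint_AB_paths F A B k P \<longleftrightarrow> finite P \<and> card P = k \<and> (\<forall>p\<in>P. AB_path F A B p) \<and>
     (\<forall>p\<in>P. \<forall>q\<in>P. p \<noteq> q \<longrightarrow> set p \<inter> set q = {})"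

lemma reach_avoiding_mono:
  assumes "edges_avoiding F Z \<subseteq> edges_avoiding F' Z'" "Z' \<subseteq> Z" "reach_avoiding F Z a b"
  shows "reach_avoiding F' Z' a b"
  using assms(2,3) adj_rtranclp_mono[OF assms(1)] unfolding reach_avoiding_def by blast

lemma edges_avoiding_mono: "F \<subseteq> F' \<Longrightarrow> Z' \<subseteq> Z \<Longrightarrow> edges_avoiding F Z \<subseteq> edges_avoiding F' Z'"
  unfolding edges_avoiding_def by blast

lemma reach_avoiding_anti_mono:
  assumes "Z' \<subseteq> Z" "reach_avoiding F Z a b"
  shows "reach_avoiding F Z' a b"
  by (rule reach_avoiding_mono[OF edges_avoiding_mono[OF order_refl assms(1)] assms])

lemma reach_avoiding_refl: "a \<notin> Z \<Longrightarrow> reach_avoiding F Z a a"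
  unfolding reach_avoiding_def by simp

lemma reach_avoiding_notin:
  assumes "reach_avoiding F Z a b"
  shows "b \<notin> Z"
proof -
  have "(adj (edges_avoiding F Z))\<^sup>*\<^sup>* a b" "a \<notin> Z" using assms unfolding reach_avoiding_def by auto
  thus ?thesis by (induction rule: rtranclp_induct) (auto simp: adj_def edges_avoiding_def)
qed

lemma reach_avoiding_trans:
  "reach_avoiding F Z a b \<Longrightarrow> reach_avoiding F Z b c \<Longrightarrow> reach_avoiding F Z a c"
  unfolding reach_avoiding_def by (meson rtranclp_trans)

lemma reach_avoiding_sym: "reach_avoiding F Z a b \<Longrightarrow> reach_avoiding F Z b a"
  using reach_avoiding_notin[of F Z a b] unfolding reach_avoiding_def by (meson adj_rtranclp_sym)

lemma reach_avoiding_step: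
  assumes "reach_avoiding F Z a t" "adj F t t'" "t' \<notin> Z"
  shows "reach_avoiding F Z a t'"
proof -
  have "adj (edges_avoiding F Z) t t'"
    using assms reach_avoiding_notin[OF assms(1)] by (auto simp: adj_def edges_avoiding_def)
  thus ?thesis using assms(1) unfolding reach_avoiding_def by (meson rtranclp.rtrancl_into_rtrancl)
qed

lemma successively_reach_avoiding:
  "successively (adj F) p \<Longrightarrow> p \<noteq> [] \<Longrightarrow> set p \<inter> Z = {} \<Longrightarrow> reach_avoiding F Z (hd p) (last p)"
proof (induction p rule: induct_list012)
  case (3 a b p)
  hence "reach_avoiding F Z b (last (b # p))" "adj F b a" "a \<notin> Z" by (auto intro: adj_sym)
  hence "reach_avoiding F Z (last (b # p)) a" by (meson reach_avoiding_step reach_avoiding_sym)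
  thus ?case by (simp add: reach_avoiding_sym)
qed (auto intro: reach_avoiding_refl)

lemma separates_sym: "separates F A B Z \<Longrightarrow> separates F B A Z"
  unfolding separates_def by (meson reach_avoiding_sym)

lemma separates_mono:
  assumes "separates F' A B Z'" "edges_avoiding F Z \<subseteq> edges_avoiding F' Z'" "Z' \<subseteq> Z"
  shows "separates F A B Z"
  using assms(1) reach_avoiding_mono[OF assms(2,3)] unfolding separates_def by meson

lemma AB_path_mono: "AB_path F A B p \<Longrightarrow> F \<subseteq> F' \<Longrightarrow> AB_path F' A B p"
  unfolding AB_path_def by (metis adj_mono successively_mono)

lemma disjoint_AB_paths_mono: "disjoint_AB_paths F A B k P \<Longrightarrow> F \<subseteq> F' \<Longrightarrow> disjoint_AB_paths F' A B k P"
  unfolding disjoint_AB_paths_def using AB_path_mono by blast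

lemma AB_path_rev: "AB_path F A B p \<Longrightarrow> AB_path F B A (rev p)"
  unfolding AB_path_def
  by (auto simp: hd_rev last_rev successively_rev intro: successively_mono adj_sym)

lemma disjoint_AB_paths_rev: "disjoint_AB_paths F A B k P \<Longrightarrow> disjoint_AB_paths F B A k (rev ` P)"
  unfolding disjoint_AB_paths_def
  by (auto simp: card_image inj_on_def AB_path_rev)

lemma bij_betw_disjoint_lists:
  assumes "finite X" "card P = card X" "\<And>p. p \<in> P \<Longrightarrow> f p \<in> set p \<inter> X"
    and "\<And>p q. p \<in> P \<Longrightarrow> q \<in> P \<Longrightarrow> p \<noteq> q \<Longrightarrow> set p \<inter> set q = {}"
  shows "bij_betw f P X"
proof -
  have "inj_on f P"
  proof (rule inj_onI)
    fix p q assume pq: "p \<in> P" "q \<in> P" "f p = f q"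
    hence "set p \<inter> set q \<noteq> {}" using assms(3)[OF pq(1)] assms(3)[OF pq(2)] by auto
    thus "p = q" using assms(4)[OF pq(1,2)] by blast
  qed
  moreover have "f ` P \<subseteq> X" using assms(3) by blast
  moreover have "card (f ` P) = card X" using card_image[OF \<open>inj_on f P\<close>] assms(2) by simp
  ultimately show ?thesis using card_subset_eq[OF assms(1)] by (simp add: bij_betw_def)
qed

lemma disjoint_AB_paths_bij_last:
  assumes "disjoint_AB_paths G A X (card X) P" "finite X"
  shows "bij_betw last P X"
  using assms unfolding disjoint_AB_paths_def AB_path_def
  by (intro bij_betw_disjoint_lists) auto

lemma disjoint_AB_paths_bij_hd:
  assumes "disjoint_AB_paths G X B (card X) Q" "finite X"
  shows "bij_betw hd Q X"
  using assms unfolding disjoint_AB_paths_def AB_path_def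
  by (intro bij_betw_disjoint_lists) auto

lemma AB_path_prefix_reach:
  assumes "AB_path G A B p" "z \<in> set p" "z \<notin> Y" "Y \<subseteq> B"
  shows "reach_avoiding G Y (hd p) z"
proof -
  obtain p1 p2 where p: "p = p1 @ z # p2" using assms(2) by (meson split_list)
  have "successively (adj G) (p1 @ [z])" "distinct p"
    using assms(1) unfolding AB_path_def p by (auto simp: successively_append_iff)
  moreover have "set (p1 @ [z]) \<inter> Y = {}"
  proof -
    have "last p \<notin> set p1" using \<open>distinct p\<close> p by (cases p2) auto
    thus ?thesis using assms(1,3,4) p unfolding AB_path_def by auto
  qed
  ultimately show ?thesis using successively_reach_avoiding[of G "p1 @ [z]" Y] p by (cases p1) auto
qed

lemma AB_path_suffix_reach:
  assumes "AB_path G A B q" "z \<in> set q" "z \<notin> Y" "Y \<subseteq> A"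
  shows "reach_avoiding G Y z (last q)"
  using AB_path_prefix_reach[OF AB_path_rev[OF assms(1)], of z Y] assms(2-4)
  by (simp add: hd_rev reach_avoiding_sym)

lemma reach_avoiding_insert_edge:
  assumes "reach_avoiding (insert {x, y} G) Y a b"
  shows "reach_avoiding G Y a b \<or> (reach_avoiding G Y a x \<and> reach_avoiding G Y y b) \<or>
         (reach_avoiding G Y a y \<and> reach_avoiding G Y x b)"
proof (cases "{x, y} \<inter> Y = {}")
  case True
  hence "edges_avoiding (insert {x, y} G) Y = insert {x, y} (edges_avoiding G Y)"
    by (auto simp: edges_avoiding_def)
  with assms have "a \<notin> Y" "(adj (insert {x, y} (edges_avoiding G Y)))\<^sup>*\<^sup>* a b"
    unfolding reach_avoiding_def by auto
  from adj_rtranclp_insert_edge[OF this(2)] this(1) True show ?thesis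
    unfolding reach_avoiding_def by blast
next
  case False
  hence "edges_avoiding (insert {x, y} G) Y = edges_avoiding G Y"
    by (auto simp: edges_avoiding_def)
  with assms show ?thesis unfolding reach_avoiding_def by simp
qed

text \<open>A walk from \<open>A\<close> in \<open>F\<close> avoiding \<open>Z\<close> stays in \<open>F - {{x, y}}\<close> until it first meets
  \<open>insert x Y\<close>: it could only use the edge from its \<open>y\<close> end, and \<open>y\<close> is unreachable.\<close>
lemma reach_avoiding_until_hit:
  assumes "reach_avoiding F Z a t" "a \<in> A"
    and noA: "\<forall>a\<in>A. \<not> reach_avoiding (F - {{x, y}}) Y a y"
  shows "(\<exists>z\<in>insert x Y. reach_avoiding (F - {{x, y}}) Z a z) \<or>
         reach_avoiding (F - {{x, y}}) (Z \<union> insert x Y) a t"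
proof -
  let ?G = "F - {{x, y}}" and ?X = "insert x Y"
  have aZ: "a \<notin> Z" using assms(1) unfolding reach_avoiding_def by auto
  have "(adj (edges_avoiding F Z))\<^sup>*\<^sup>* a t" using assms(1) unfolding reach_avoiding_def by auto
  thus ?thesis
  proof (induction rule: rtranclp_induct)
    case base
    show ?case using aZ reach_avoiding_refl[of a Z ?G] reach_avoiding_refl[of a "Z \<union> ?X" ?G]
      by (cases "a \<in> ?X") auto
  next
    case (step t t')
    from step.IH show ?case
    proof
      assume "\<exists>z\<in>?X. reach_avoiding ?G Z a z"
      thus ?thesis ..
    next
      assume r: "reach_avoiding ?G (Z \<union> ?X) a t"
      have tZX: "t \<notin> Z \<union> ?X" using reach_avoiding_notin[OF r] .
      have tt: "t \<noteq> t'" "{t, t'} \<in> F" "t' \<notin> Z"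
        using step.hyps(2) unfolding adj_def edges_avoiding_def by auto
      have "{t, t'} \<noteq> {x, y}"
      proof
        assume "{t, t'} = {x, y}"
        hence "t = y" using tZX by (auto simp: doubleton_eq_iff)
        moreover have "reach_avoiding ?G Y a t"
          using r by (rule reach_avoiding_anti_mono[rotated]) auto
        ultimately show False using noA assms(2) by blast
      qed
      hence adjG: "adj ?G t t'" using tt by (simp add: adj_def)
      show ?thesis
      proof (cases "t' \<in> ?X")
        case True
        have "reach_avoiding ?G Z a t"
          using r by (rule reach_avoiding_anti_mono[rotated]) auto
        hence "reach_avoiding ?G Z a t'" using adjG tt(3) by (rule reach_avoiding_step)
        with True show ?thesis by blast
      next
        case False
        with tt(3) have "reach_avoiding ?G (Z \<union> ?X) a t'" using reach_avoiding_step[OF r adjG] by blast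
        thus ?thesis ..
      qed
    qed
  qed
qed

lemma separates_through_edge:
  assumes sepY: "separates (F - {{x, y}}) A B Y"
    and noA: "\<forall>a\<in>A. \<not> reach_avoiding (F - {{x, y}}) Y a y"
    and sepZ: "separates (F - {{x, y}}) A (insert x Y) Z"
  shows "separates F A B Z"
  unfolding separates_def
proof (intro ballI notI)
  fix a b assume ab: "a \<in> A" "b \<in> B" "reach_avoiding F Z a b"
  from reach_avoiding_until_hit[OF ab(3,1) noA] show False
  proof
    assume "\<exists>z\<in>insert x Y. reach_avoiding (F - {{x, y}}) Z a z"
    thus False using sepZ ab(1) unfolding separates_def by blast
  next
    assume "reach_avoiding (F - {{x, y}}) (Z \<union> insert x Y) a b"
    hence "reach_avoiding (F - {{x, y}}) Y a b"
      by (rule reach_avoiding_anti_mono[rotated]) auto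
    thus False using sepY ab(1,2) unfolding separates_def by blast
  qed
qed

lemma AB_path_append:
  assumes p: "AB_path F A X p" and q: "AB_path F X' B q" and pq: "adj F (last p) (hd q)"
    and "set p \<inter> set q = {}" "set q \<inter> A = {}" "set p \<inter> B = {}"
  shows "AB_path F A B (p @ q)"
  using assms unfolding AB_path_def by (auto simp: successively_append_iff)

lemma AB_path_join:
  assumes p: "AB_path F A X p" and q: "AB_path F X' B q" and pq: "last p = hd q"
    and meet: "set p \<inter> set q = {hd q}"
    and A: "\<forall>z\<in>set q. z \<in> A \<longrightarrow> z = hd q" and B: "\<forall>z\<in>set p. z \<in> B \<longrightarrow> z = last p"
  shows "AB_path F A B (p @ tl q)"
proof -
  obtain c r where qc: "q = c # r" using q by (cases q) (auto simp: AB_path_def)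
  have q': "c \<notin> set r" "distinct r" "successively (adj F) (c # r)" "last q \<in> B"
    "\<forall>z\<in>set q. z \<in> B \<longrightarrow> z = last q"
    using q unfolding qc AB_path_def by auto
  have p': "p \<noteq> []" "distinct p" "successively (adj F) p" "hd p \<in> A"
    "\<forall>z\<in>set p. z \<in> A \<longrightarrow> z = hd p"
    using p unfolding AB_path_def by auto
  have cB: "r = []" if "c \<in> B"
  proof (rule ccontr)
    assume "r \<noteq> []"
    hence "last q \<in> set r" using qc by simp
    thus False using q'(1,5) that qc by auto
  qed
  have last: "last (p @ r) = last q" using qc pq p'(1) by (cases "r = []") auto
  have "set p \<inter> set r = {}" using meet q'(1) qc by auto
  moreover have "successively (adj F) (p @ r)"
    using p'(1,3) q'(3) pq qc by (cases r) (auto simp: successively_append_iff)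
  moreover have "\<forall>z\<in>set (p @ r). z \<in> A \<longrightarrow> z = hd (p @ r)"
    using A p'(1,5) q'(1) qc by auto
  moreover have "\<forall>z\<in>set (p @ r). z \<in> B \<longrightarrow> z = last (p @ r)"
    using B q'(5) cB last pq qc p'(1) by auto
  ultimately show ?thesis
    using p' q' last qc unfolding AB_path_def by auto
qed

text \<open>Gluing \<open>|Y| + 1\<close> disjoint paths from \<open>A\<close> to \<open>insert x Y\<close> with as many from \<open>insert y Y\<close> to
  \<open>B\<close>, all avoiding the edge \<open>{x, y}\<close>, along \<open>Y\<close> and along that edge.  The two families can only
  meet in \<open>Y\<close>, because \<open>Y\<close> separates \<open>A\<close> from \<open>B\<close>.\<close>
locale AB_path_gluing =
  fixes F :: "'a set set" and A B Y :: "'a set" and x y :: 'a and P Q :: "'a list set"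
  assumes edge: "{x, y} \<in> F" "x \<noteq> y" and finite_Y: "finite Y" and xY: "x \<notin> Y" and yY: "y \<notin> Y"
    and sepY: "separates (F - {{x, y}}) A B Y"
    and P: "disjoint_AB_paths (F - {{x, y}}) A (insert x Y) (card (insert x Y)) P"
    and Q: "disjoint_AB_paths (F - {{x, y}}) (insert y Y) B (card (insert y Y)) Q"
begin

abbreviation G :: "'a set set" where "G \<equiv> F - {{x, y}}"

definition path_to :: "'a \<Rightarrow> 'a list" where "path_to t = the_inv_into P last t"

definition path_from :: "'a \<Rightarrow> 'a list" where "path_from t = the_inv_into Q hd t"

lemma path_to: "t \<in> insert x Y \<Longrightarrow> path_to t \<in> P \<and> last (path_to t) = t"
  using disjoint_AB_paths_bij_last[OF P] finite_Y unfolding path_to_def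
  by (meson bij_betwE bij_betw_the_inv_into f_the_inv_into_f_bij_betw finite_insert)

lemma path_from: "t \<in> insert y Y \<Longrightarrow> path_from t \<in> Q \<and> hd (path_from t) = t"
  using disjoint_AB_paths_bij_hd[OF Q] finite_Y unfolding path_from_def
  by (meson bij_betwE bij_betw_the_inv_into f_the_inv_into_f_bij_betw finite_insert)

lemma P_AB_path: "p \<in> P \<Longrightarrow> AB_path G A (insert x Y) p"
  using P unfolding disjoint_AB_paths_def by blast

lemma Q_AB_path: "q \<in> Q \<Longrightarrow> AB_path G (insert y Y) B q"
  using Q unfolding disjoint_AB_paths_def by blast

lemma P_Q_meet:
  assumes "p \<in> P" "q \<in> Q" "z \<in> set p" "z \<in> set q"
  shows "z \<in> Y \<and> z = last p \<and> z = hd q"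
proof -
  have "z \<in> Y"
  proof (rule ccontr)
    assume "z \<notin> Y"
    hence "reach_avoiding G Y (hd p) (last q)"
      using AB_path_prefix_reach[OF P_AB_path[OF assms(1)] assms(3) _ subset_insertI]
        AB_path_suffix_reach[OF Q_AB_path[OF assms(2)] assms(4) _ subset_insertI]
      by (metis reach_avoiding_trans)
    moreover have "hd p \<in> A" "last q \<in> B"
      using P_AB_path[OF assms(1)] Q_AB_path[OF assms(2)] by (auto simp: AB_path_def)
    ultimately show False using sepY by (auto simp: separates_def)
  qed
  thus ?thesis using P_AB_path[OF assms(1)] Q_AB_path[OF assms(2)] assms(3,4)
    by (auto simp: AB_path_def)
qed

lemma P_Q_inter: "p \<in> P \<Longrightarrow> q \<in> Q \<Longrightarrow> set p \<inter> set q \<subseteq> Y \<inter> {last p} \<inter> {hd q}"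
  using P_Q_meet by blast

lemma Q_meets_A: "q \<in> Q \<Longrightarrow> z \<in> set q \<Longrightarrow> z \<in> A \<Longrightarrow> z \<in> Y"
  using AB_path_suffix_reach[OF Q_AB_path] Q_AB_path sepY
  by (fastforce simp: separates_def AB_path_def)

lemma P_meets_B: "p \<in> P \<Longrightarrow> z \<in> set p \<Longrightarrow> z \<in> B \<Longrightarrow> z \<in> Y"
  using AB_path_prefix_reach[OF P_AB_path] P_AB_path sepY
  by (fastforce simp: separates_def AB_path_def)

definition glued :: "'a \<Rightarrow> 'a list" where
  "glued t = (if t = x then path_to x @ path_from y else path_to t @ tl (path_from t))"

lemma AB_path_glued_x: "AB_path F A B (glued x)"
proof -
  let ?p = "path_to x" and ?q = "path_from y"
  have p: "?p \<in> P" "last ?p = x" and q: "?q \<in> Q" "hd ?q = y" using path_to path_from by auto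
  show ?thesis unfolding glued_def if_P[OF refl]
  proof (rule AB_path_append)
    show "AB_path F A (insert x Y) ?p" "AB_path F (insert y Y) B ?q"
      using P_AB_path[OF p(1)] Q_AB_path[OF q(1)] AB_path_mono by blast+
    show "adj F (last ?p) (hd ?q)" using edge p(2) q(2) by (simp add: adj_def)
    have "set ?p \<inter> set ?q \<subseteq> Y \<inter> {x}" using P_Q_inter[OF p(1) q(1)] p(2) by simp
    thus "set ?p \<inter> set ?q = {}" using xY by auto
    show "set ?q \<inter> A = {}" using Q_meets_A[OF q(1)] P_Q_meet Q_AB_path[OF q(1)] q(2) yY
      by (force simp: AB_path_def)
    show "set ?p \<inter> B = {}" using P_meets_B[OF p(1)] P_AB_path[OF p(1)] p(2) xY
      by (force simp: AB_path_def)
  qed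
qed

lemma AB_path_glued_Y:
  assumes "t \<in> Y"
  shows "AB_path F A B (glued t)"
proof -
  let ?p = "path_to t" and ?q = "path_from t"
  have p: "?p \<in> P" "last ?p = t" and q: "?q \<in> Q" "hd ?q = t" using path_to path_from assms by auto
  have "glued t = ?p @ tl ?q" using assms xY by (auto simp: glued_def)
  also have "AB_path F A B \<dots>"
  proof (rule AB_path_join)
    show "AB_path F A (insert x Y) ?p" "AB_path F (insert y Y) B ?q"
      using P_AB_path[OF p(1)] Q_AB_path[OF q(1)] AB_path_mono by blast+
    show "last ?p = hd ?q" using p(2) q(2) by simp
    have "?p \<noteq> []" "?q \<noteq> []" using P_AB_path[OF p(1)] Q_AB_path[OF q(1)] by (auto simp: AB_path_def)
    hence "t \<in> set ?p" "t \<in> set ?q" using p(2) q(2) by (metis last_in_set hd_in_set)+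
    moreover have "set ?p \<inter> set ?q \<subseteq> {t}" using P_Q_inter[OF p(1) q(1)] q(2) by simp
    ultimately show "set ?p \<inter> set ?q = {hd ?q}" using q(2) by auto
    show "\<forall>z\<in>set ?q. z \<in> A \<longrightarrow> z = hd ?q"
      using Q_meets_A[OF q(1)] Q_AB_path[OF q(1)] by (auto simp: AB_path_def)
    show "\<forall>z\<in>set ?p. z \<in> B \<longrightarrow> z = last ?p"
      using P_meets_B[OF p(1)] P_AB_path[OF p(1)] by (auto simp: AB_path_def)
  qed
  finally show ?thesis .
qed

lemma set_glued_subset: "set (glued t) \<subseteq> set (path_to t) \<union> set (path_from (if t = x then y else t))"
  unfolding glued_def by (cases "path_from t") auto

lemma glued_disjoint:
  assumes "t \<in> insert x Y" "t' \<in> insert x Y" "t \<noteq> t'"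
  shows "set (glued t) \<inter> set (glued t') = {}"
proof -
  let ?s = "\<lambda>t. if t = x then y else t"
  have s: "?s t \<in> insert y Y" "?s t' \<in> insert y Y" "?s t \<noteq> ?s t'" using assms xY yY by auto
  have "set (path_to t) \<inter> set (path_to t') = {}"
    using P path_to[OF assms(1)] path_to[OF assms(2)] assms(3)
    unfolding disjoint_AB_paths_def by metis
  moreover have "set (path_from (?s t)) \<inter> set (path_from (?s t')) = {}"
    using Q path_from[OF s(1)] path_from[OF s(2)] s(3)
    unfolding disjoint_AB_paths_def by metis
  moreover have "set (path_to r) \<inter> set (path_from (?s r')) = {}"
    if "r \<in> insert x Y" "r' \<in> insert x Y" "r \<noteq> r'" for r r'
  proof -
    have "?s r' \<in> insert y Y" using that by auto
    from P_Q_meet[OF conjunct1[OF path_to[OF that(1)]] conjunct1[OF path_from[OF this]]]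
    show ?thesis using path_to[OF that(1)] path_from[OF \<open>?s r' \<in> insert y Y\<close>] that yY
      by (auto split: if_splits)
  qed
  ultimately show ?thesis using set_glued_subset[of t] set_glued_subset[of t'] assms by blast
qed

theorem disjoint_AB_paths_glued: "disjoint_AB_paths F A B (card (insert x Y)) (glued ` insert x Y)"
proof -
  have AB: "AB_path F A B (glued t)" if "t \<in> insert x Y" for t
    using that AB_path_glued_x AB_path_glued_Y by blast
  have "inj_on glued (insert x Y)"
  proof (rule inj_onI, rule ccontr)
    fix t t' assume tt: "t \<in> insert x Y" "t' \<in> insert x Y" "glued t = glued t'" "t \<noteq> t'"
    hence "set (glued t) = {}" using glued_disjoint[OF tt(1,2,4)] by simp
    thus False using AB[OF tt(1)] by (simp add: AB_path_def)
  qed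
  hence "card (glued ` insert x Y) = card (insert x Y)" by (rule card_image)
  moreover have "finite (glued ` insert x Y)" using finite_Y by simp
  ultimately show ?thesis using AB glued_disjoint unfolding disjoint_AB_paths_def by fastforce
qed

end

lemma separates_no_edges: "separates {} A B (A \<inter> B)"
proof -
  have "edges_avoiding {} (A \<inter> B) = {}" by (simp add: edges_avoiding_def)
  thus ?thesis by (auto simp: separates_def reach_avoiding_def adj_def elim: converse_rtranclpE)
qed

lemma disjoint_AB_paths_singletons:
  assumes "finite S" "S \<subseteq> A \<inter> B"
  shows "disjoint_AB_paths F A B (card S) ((\<lambda>a. [a]) ` S)"
proof -
  have "inj_on (\<lambda>a. [a]) S" by (simp add: inj_on_def)
  thus ?thesis using assms unfolding disjoint_AB_paths_def AB_path_def by (auto simp: card_image)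
qed

text \<open>The inductive step of Menger's theorem when deleting \<open>{x, y}\<close> creates a separator \<open>Y\<close> with
  \<open>|Y| < k\<close>: both \<open>insert x Y\<close> and \<open>insert y Y\<close> are then minimum separators, and the paths
  to and from them given by induction are glued.\<close>
lemma menger_edge_step:
  assumes IH: "\<And>A' B'. finite A' \<Longrightarrow> finite B' \<Longrightarrow>
      \<forall>Z. finite Z \<and> separates (F - {{x, y}}) A' B' Z \<longrightarrow> k \<le> card Z \<Longrightarrow>
      \<exists>P. disjoint_AB_paths (F - {{x, y}}) A' B' k P"
    and edge: "{x, y} \<in> F" "x \<noteq> y"
    and Y: "finite Y" "x \<notin> Y" "y \<notin> Y" "card Y + 1 = k" and sepY: "separates (F - {{x, y}}) A B Y"
    and AB: "finite A" "finite B" and min_sep: "\<forall>Z. finite Z \<and> separates F A B Z \<longrightarrow> k \<le> card Z"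
    and a: "a \<in> A" "reach_avoiding (F - {{x, y}}) Y a x"
    and b: "b \<in> B" "reach_avoiding (F - {{x, y}}) Y y b"
  shows "\<exists>R. disjoint_AB_paths F A B k R"
proof -
  let ?G = "F - {{x, y}}"
  have card: "card (insert x Y) = k" "card (insert y Y) = k" using Y by auto
  have noA: "\<forall>a'\<in>A. \<not> reach_avoiding ?G Y a' y"
  proof (intro ballI notI)
    fix a' assume "a' \<in> A" and r: "reach_avoiding ?G Y a' y"
    from r b(2) have "reach_avoiding ?G Y a' b" by (rule reach_avoiding_trans)
    thus False using sepY \<open>a' \<in> A\<close> b(1) unfolding separates_def by blast
  qed
  have noB: "\<forall>b'\<in>B. \<not> reach_avoiding ?G Y b' x"
  proof (intro ballI notI)
    fix b' assume "b' \<in> B" "reach_avoiding ?G Y b' x"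
    hence "reach_avoiding ?G Y a b'" using a(2) by (metis reach_avoiding_sym reach_avoiding_trans)
    thus False using sepY \<open>b' \<in> B\<close> a(1) unfolding separates_def by blast
  qed
  have "k \<le> card Z" if "finite Z" "separates ?G A (insert x Y) Z" for Z
    using min_sep separates_through_edge[OF sepY noA that(2)] that(1) by blast
  then obtain P where P: "disjoint_AB_paths ?G A (insert x Y) k P"
    using IH[OF AB(1) finite_insert[THEN iffD2, OF Y(1)]] by blast
  have G_sym: "F - {{y, x}} = ?G" by (simp add: insert_commute)
  have "k \<le> card Z" if "finite Z" "separates ?G B (insert y Y) Z" for Z
  proof -
    have "separates F B A Z"
      using separates_through_edge[of F y x B A Y Z] separates_sym[OF sepY] noB that(2)
      unfolding G_sym by blast
    thus ?thesis using min_sep separates_sym[of F B A Z] that(1) by blast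
  qed
  then obtain Q where "disjoint_AB_paths ?G B (insert y Y) k Q"
    using IH[OF AB(2) finite_insert[THEN iffD2, OF Y(1)]] by blast
  hence Q: "disjoint_AB_paths ?G (insert y Y) B k (rev ` Q)" by (rule disjoint_AB_paths_rev)
  interpret AB_path_gluing F A B Y x y P "rev ` Q"
    using edge Y sepY P Q card by unfold_locales simp_all
  show ?thesis using disjoint_AB_paths_glued card(1) by auto
qed

lemma menger_small_separator:
  assumes IH: "\<And>A' B'. finite A' \<Longrightarrow> finite B' \<Longrightarrow>
      \<forall>Z. finite Z \<and> separates (F - {{x, y}}) A' B' Z \<longrightarrow> k \<le> card Z \<Longrightarrow>
      \<exists>P. disjoint_AB_paths (F - {{x, y}}) A' B' k P"
    and edge: "{x, y} \<in> F" "x \<noteq> y"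
    and AB: "finite A" "finite B" and min_sep: "\<forall>Z. finite Z \<and> separates F A B Z \<longrightarrow> k \<le> card Z"
    and Y: "finite Y" "separates (F - {{x, y}}) A B Y" "card Y < k"
  shows "\<exists>R. disjoint_AB_paths F A B k R"
proof -
  let ?G = "F - {{x, y}}"
  have "edges_avoiding F (insert x Y) \<subseteq> edges_avoiding ?G Y"
    "edges_avoiding F (insert y Y) \<subseteq> edges_avoiding ?G Y" by (auto simp: edges_avoiding_def)
  hence "separates F A B (insert x Y)" "separates F A B (insert y Y)"
    using separates_mono[OF Y(2)] by blast+
  hence "k \<le> card (insert x Y)" "k \<le> card (insert y Y)" using min_sep Y(1) by auto
  hence xyY: "x \<notin> Y" "y \<notin> Y" "card Y + 1 = k" using Y by (auto simp: card_insert_if split: if_splits)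
  have "\<not> separates F A B Y" using min_sep Y(1,3) by auto
  then obtain a b where ab: "a \<in> A" "b \<in> B" "reach_avoiding F Y a b"
    unfolding separates_def by blast
  hence "reach_avoiding (insert {x, y} ?G) Y a b" using edge(1) by (simp add: insert_absorb)
  from reach_avoiding_insert_edge[OF this] Y(2) ab(1,2)
  consider "reach_avoiding ?G Y a x" "reach_avoiding ?G Y y b"
    | "reach_avoiding ?G Y a y" "reach_avoiding ?G Y x b"
    unfolding separates_def by blast
  thus ?thesis
  proof cases
    case 1
    show ?thesis by (rule menger_edge_step[OF IH edge Y(1) xyY Y(2) AB min_sep ab(1) 1(1) ab(2) 1(2)])
  next
    case 2
    have "{y, x} \<in> F" "F - {{y, x}} = ?G" using edge(1) by (auto simp: insert_commute)
    thus ?thesis using menger_edge_step[of F y x k Y A B a b] IH edge(2) Y xyY AB min_sep ab 2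
      by auto
  qed
qed

text \<open>Goering's proof, by induction on the number of edges.\<close>
theorem menger:
  assumes "finite F" "\<forall>e\<in>F. card e = 2" "finite A" "finite B"
    and "\<forall>Z. finite Z \<and> separates F A B Z \<longrightarrow> k \<le> card Z"
  shows "\<exists>P. disjoint_AB_paths F A B k P"
  using assms
proof (induction "card F" arbitrary: F A B rule: less_induct)
  case less
  show ?case
  proof (cases "F = {}")
    case True
    hence "k \<le> card (A \<inter> B)" using less.prems(3,5) separates_no_edges by blast
    then obtain S where "S \<subseteq> A \<inter> B" "card S = k" "finite S" by (rule obtain_subset_with_card_n)
    thus ?thesis using disjoint_AB_paths_singletons by metis
  next
    case False
    then obtain x y where xy: "{x, y} \<in> F" "x \<noteq> y" using less.prems(2) by (metis card_2_iff ex_in_conv)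
    let ?G = "F - {{x, y}}"
    have "card ?G < card F" using xy(1) less.prems(1) by (meson card_Diff1_less)
    moreover have "finite ?G" "\<forall>e\<in>?G. card e = 2" using less.prems(1,2) by auto
    ultimately have IH: "\<And>A' B'. finite A' \<Longrightarrow> finite B' \<Longrightarrow>
        \<forall>Z. finite Z \<and> separates ?G A' B' Z \<longrightarrow> k \<le> card Z \<Longrightarrow> \<exists>P. disjoint_AB_paths ?G A' B' k P"
      using less.hyps by blast
    show ?thesis
    proof (cases "\<forall>Z. finite Z \<and> separates ?G A B Z \<longrightarrow> k \<le> card Z")
      case True
      then obtain P where "disjoint_AB_paths ?G A B k P" using IH less.prems(3,4) by blast
      thus ?thesis using disjoint_AB_paths_mono by blast
    next
      case False
      then obtain Y where "finite Y" "separates ?G A B Y" "card Y < k" by auto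
      thus ?thesis using menger_small_separator[OF IH xy less.prems(3-5)] by blast
    qed
  qed
qed

section \<open>Every \<open>k\<close>-constructible graph lies in some \<open>M\<^sub>k\<close>\<close>

lemma successively_adj_in_edge:
  "successively (adj F) p \<Longrightarrow> z \<in> set p \<Longrightarrow> z = hd p \<or> (\<exists>f\<in>F. z \<in> f)"
proof (induction p rule: induct_list012)
  case (3 a b p)
  hence "z = a \<or> z = b \<or> z \<in> set (b # p)" "{a, b} \<in> F" by (auto simp: adj_def)
  thus ?case using 3 by (auto simp: adj_def)
qed auto

text \<open>Menger's theorem for two non-adjacent vertices \<open>u\<close> and \<open>v\<close>, applied to the neighbourhoods of
  \<open>u\<close> and \<open>v\<close> in the graph without \<open>u\<close> and \<open>v\<close>.\<close>
lemma neighbourhood_separator: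
  assumes HV: "H \<subseteq> all_edges V" and finV: "finite V" and uv: "u \<noteq> v" "{u, v} \<notin> H"
    and paths: "at_most_disjoint_paths H u v m"
  shows "\<exists>Z. finite Z \<and> card Z \<le> m \<and>
           separates (edges_avoiding H {u, v}) {a. {u, a} \<in> H} {b. {v, b} \<in> H} Z"
proof (rule ccontr)
  let ?H = "edges_avoiding H {u, v}" and ?A = "{a. {u, a} \<in> H}" and ?B = "{b. {v, b} \<in> H}"
  assume "\<not> ?thesis"
  hence min_sep: "\<forall>Z. finite Z \<and> separates ?H ?A ?B Z \<longrightarrow> Suc m \<le> card Z"
    by (meson not_less_eq_eq)
  have finH: "finite ?H"
    using HV finite_all_edges[OF finV] by (auto simp: edges_avoiding_def intro: finite_subset)
  have "?A \<subseteq> V" "?B \<subseteq> V" using HV by (auto simp: all_edges_def)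
  hence "finite ?A" "finite ?B" using finV finite_subset by auto
  moreover have "\<forall>e\<in>?H. card e = 2" using HV by (auto simp: edges_avoiding_def all_edges_def)
  ultimately obtain P where P: "disjoint_AB_paths ?H ?A ?B (Suc m) P"
    using menger[OF finH _ _ _ min_sep] by blast
  have AB: "AB_path ?H ?A ?B p" if "p \<in> P" for p using P that by (simp add: disjoint_AB_paths_def)
  have uv_notin: "u \<notin> set p \<and> v \<notin> set p" if "p \<in> P" for p
  proof -
    have "successively (adj ?H) p" "{u, hd p} \<in> H" using AB[OF that] by (auto simp: AB_path_def)
    moreover have "u \<noteq> hd p" "v \<noteq> hd p"
      using HV uv(2) \<open>{u, hd p} \<in> H\<close> by (auto simp: all_edges_def)
    ultimately show ?thesis
      using successively_adj_in_edge[of ?H p] by (auto simp: edges_avoiding_def)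
  qed
  define extend where "extend p = u # p @ [v]" for p
  have path: "is_path H u v (extend p)" if "p \<in> P" for p
  proof -
    have p: "p \<noteq> []" "distinct p" "successively (adj H) p" "{u, hd p} \<in> H" "{v, last p} \<in> H"
      using AB[OF that] adj_mono[of ?H H]
      by (auto simp: AB_path_def edges_avoiding_def intro: successively_mono)
    moreover have "adj H u (hd p)" "adj H (last p) v"
      using p uv_notin[OF that] hd_in_set last_in_set by (fastforce simp: adj_def insert_commute)+
    ultimately have "successively (adj H) (extend p)"
      by (simp add: extend_def successively_append_iff successively_Cons)
    thus ?thesis using p uv_notin[OF that] uv(1)
      by (auto simp: is_path_def extend_def adj_def successively_conv_nth)
  qed
  have "inj_on extend P" by (simp add: inj_on_def extend_def)
  moreover have "internal (extend p) = set p" for p by (simp add: extend_def internal_def)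
  ultimately have "finite (extend ` P) \<and> int_disjoint_paths H u v (extend ` P)"
    using P path unfolding disjoint_AB_paths_def int_disjoint_paths_def by (auto simp: inj_on_eq_iff)
  hence "card (extend ` P) \<le> m" using paths unfolding at_most_disjoint_paths_def by blast
  moreover have "card (extend ` P) = Suc m"
    using card_image[OF \<open>inj_on extend P\<close>] P by (simp add: disjoint_AB_paths_def)
  ultimately show False by simp
qed

text \<open>Along a walk from \<open>u\<close> avoiding \<open>X\<close>, every vertex but \<open>u\<close> is reachable from a neighbour of
  \<open>u\<close> avoiding \<open>Z\<close>; so the walk cannot get to a neighbour of \<open>v\<close>.\<close>
lemma neighbourhood_separator_blocks:
  assumes HV: "H \<subseteq> all_edges V" and uv: "u \<noteq> v" "{u, v} \<notin> H"
    and sep: "separates (edges_avoiding H {u, v}) {a. {u, a} \<in> H} {b. {v, b} \<in> H} Z"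
    and ZX: "Z \<inter> (V - {u, v}) \<subseteq> X"
  shows "\<not> (adj (edges_avoiding H X))\<^sup>*\<^sup>* u v"
proof
  let ?H = "edges_avoiding H {u, v}" and ?A = "{a. {u, a} \<in> H}"
  have inv: "t = u \<or> (\<exists>a\<in>?A. reach_avoiding ?H Z a t \<and> t \<noteq> u \<and> t \<noteq> v)"
    if "(adj (edges_avoiding H X))\<^sup>*\<^sup>* u t" for t
    using that
  proof (induction rule: rtranclp_induct)
    case (step t t')
    have tt: "t \<noteq> t'" "{t, t'} \<in> H" "t' \<notin> X" "t' \<in> V"
      using step.hyps(2) HV by (auto simp: adj_def edges_avoiding_def all_edges_def)
    from step.IH show ?case
    proof
      assume "t = u"
      moreover from this have "t' \<noteq> v" using tt(2) uv(2) by auto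
      ultimately show ?case using tt ZX reach_avoiding_refl[of t' Z ?H] by blast
    next
      assume "\<exists>a\<in>?A. reach_avoiding ?H Z a t \<and> t \<noteq> u \<and> t \<noteq> v"
      then obtain a where a: "a \<in> ?A" "reach_avoiding ?H Z a t" "t \<noteq> u" "t \<noteq> v" by blast
      have "t' \<noteq> v"
      proof
        assume "t' = v"
        hence "t \<in> {b. {v, b} \<in> H}" using tt(2) by (simp add: insert_commute)
        thus False using sep a(1,2) unfolding separates_def by blast
      qed
      moreover {
        assume "t' \<noteq> u"
        hence "adj ?H t t'" using tt(1,2) a(3,4) \<open>t' \<noteq> v\<close> by (auto simp: adj_def edges_avoiding_def)
        moreover have "t' \<notin> Z" using ZX tt(3,4) \<open>t' \<noteq> u\<close> \<open>t' \<noteq> v\<close> by blast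
        ultimately have "reach_avoiding ?H Z a t'" by (rule reach_avoiding_step[OF a(2)])
      }
      ultimately show ?case using a(1) by blast
    qed
  qed simp
  assume "(adj (edges_avoiding H X))\<^sup>*\<^sup>* u v"
  from inv[OF this] uv(1) show False by blast
qed

lemma few_disjoint_paths_separator:
  assumes finV: "finite V" and HV: "H \<subseteq> all_edges V" and uv: "u \<in> V" "v \<in> V" "u \<noteq> v" "{u, v} \<notin> H"
    and paths: "at_most_disjoint_paths H u v m" and m: "m \<le> card V - 2"
  obtains X where "X \<subseteq> V - {u, v}" "card X = m" "\<not> (adj (edges_avoiding H X))\<^sup>*\<^sup>* u v"
proof -
  obtain Z where Z: "finite Z" "card Z \<le> m"
    "separates (edges_avoiding H {u, v}) {a. {u, a} \<in> H} {b. {v, b} \<in> H} Z"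
    using neighbourhood_separator[OF HV finV uv(3,4) paths] by blast
  let ?S = "V - {u, v}" and ?Z = "Z \<inter> (V - {u, v})"
  have S: "finite ?S" "card ?S = card V - 2" using finV uv by (auto simp: card_Diff_subset)
  have "card ?Z \<le> m" using Z(1,2) by (meson card_mono inf_le1 le_trans)
  then obtain X where X: "?Z \<subseteq> X" "X \<subseteq> ?S" "card X = m"
    using exists_subset_between[of ?Z m ?S] m S by auto
  thus ?thesis using that neighbourhood_separator_blocks[OF HV uv(3,4) Z(3)] by blast
qed

lemma distinct_nth_notin_take: "distinct xs \<Longrightarrow> i < length xs \<Longrightarrow> xs ! i \<notin> set (take i xs)"
  by (auto simp: in_set_conv_nth nth_eq_iff_index_eq)

lemma weights_extending_order:
  assumes finV: "finite V" and es: "distinct es" "set es \<subseteq> all_edges V"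
  obtains w where "distinct_pos_weights V w"
    "\<And>i f. i < length es \<Longrightarrow> f \<in> all_edges V \<Longrightarrow> w f < w (es ! i) \<Longrightarrow> f \<in> set (take i es)"
proof -
  obtain rs where rs: "distinct rs" "set rs = all_edges V - set es"
    using finite_distinct_list[OF finite_Diff[OF finite_all_edges[OF finV]]] by blast
  define full where "full = es @ rs"
  have full: "distinct full" "set full = all_edges V" using es rs by (auto simp: full_def)
  define idx where "idx f = the_inv_into {..<length full} ((!) full) f" for f
  have bij: "bij_betw ((!) full) {..<length full} (all_edges V)"
  proof -
    have "(!) full ` {..<length full} = set full" by (auto simp: in_set_conv_nth)
    thus ?thesis using full by (simp add: bij_betw_def inj_on_nth)
  qed
  have idx: "idx f < length full" "full ! idx f = f" if "f \<in> all_edges V" for f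
    using bij_betw_the_inv_into[OF bij] f_the_inv_into_f_bij_betw[OF bij] that
    unfolding idx_def by (auto dest: bij_betwE)
  have idx_nth: "idx (full ! j) = j" if "j < length full" for j
    using the_inv_into_f_f[OF bij_betw_imp_inj_on[OF bij]] that by (simp add: idx_def)
  define w where "w f = real (idx f) + 1" for f
  have "inj_on w (all_edges V)"
  proof (rule inj_onI)
    fix f g assume fg: "f \<in> all_edges V" "g \<in> all_edges V" "w f = w g"
    hence "idx f = idx g" by (simp add: w_def)
    thus "f = g" using idx(2)[OF fg(1)] idx(2)[OF fg(2)] by metis
  qed
  hence "distinct_pos_weights V w" by (simp add: distinct_pos_weights_def w_def)
  moreover have "f \<in> set (take i es)"
    if i: "i < length es" and f: "f \<in> all_edges V" "w f < w (es ! i)" for i f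
  proof -
    have "idx (es ! i) = i" using idx_nth[of i] i by (simp add: full_def nth_append)
    hence "idx f < i" using f(2) by (simp add: w_def)
    hence "f = take i es ! idx f" using idx(2)[OF f(1)] i by (simp add: full_def nth_append)
    thus ?thesis using \<open>idx f < i\<close> i by (metis length_take min.absorb4 nth_mem)
  qed
  ultimately show ?thesis using that by blast
qed

lemma edge_in_M_if_separated:
  assumes finV: "finite V" and w: "distinct_pos_weights V w"
    and X: "X \<subseteq> V - {u, v}" "card X = k - 1" and uv: "u \<in> V" "v \<in> V" "u \<noteq> v"
    and blocked: "\<not> (adj (edges_avoiding H X))\<^sup>*\<^sup>* u v"
    and lighter: "\<And>f. f \<in> all_edges V \<Longrightarrow> w f < w {u, v} \<Longrightarrow> f \<in> H"
  shows "{u, v} \<in> M k V w"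
proof -
  interpret distinct_weights w "V - X" using distinct_weights_subset[OF finV w] by blast
  have "lighter_edges w (V - X) {u, v} \<subseteq> edges_avoiding H X"
    using lighter all_edges_mono[of "V - X" V] by (auto simp: lighter_edges_def edges_avoiding_def all_edges_def)
  hence "\<not> (adj (lighter_edges w (V - X) {u, v}))\<^sup>*\<^sup>* a b" if "{u, v} = {a, b}" for a b
    using blocked that adj_rtranclp_mono adj_rtranclp_sym by (metis doubleton_eq_iff)
  moreover have "{u, v} \<in> all_edges (V - X)" using X(1) uv by (auto intro: doubleton_in_all_edges)
  ultimately have "{u, v} \<in> MST w (V - X)"
    unfolding MST_eq_kruskal_edges kruskal_edges_def by auto
  thus ?thesis using X unfolding M_def by blast
qed

theorem k_constructible_subset_M:
  assumes finV: "finite V" and k: "k \<le> card V - 1"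
    and EV: "E \<subseteq> all_edges V" and constructible: "k_constructible k V E"
  shows "\<exists>w. distinct_pos_weights V w \<and> E \<subseteq> M k V w"
proof -
  obtain es where es: "distinct es" "set es = E"
    and few_paths: "\<And>i u v. i < length es \<Longrightarrow> es ! i = {u, v} \<Longrightarrow> u \<noteq> v \<Longrightarrow>
        at_most_disjoint_paths (set (take i es)) u v (k - 1)"
    using constructible unfolding k_constructible_def by blast
  obtain w where w: "distinct_pos_weights V w"
    and lighter: "\<And>i f. i < length es \<Longrightarrow> f \<in> all_edges V \<Longrightarrow> w f < w (es ! i) \<Longrightarrow> f \<in> set (take i es)"
    using weights_extending_order[OF finV es(1)] es(2) EV by blast
  have "es ! i \<in> M k V w" if i: "i < length es" for i
  proof -
    obtain u v where uv: "u \<noteq> v" "es ! i = {u, v}" "u \<in> V" "v \<in> V"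
      using EV es(2) nth_mem[OF i] by (meson all_edgesE subsetD)
    let ?H = "set (take i es)"
    have "?H \<subseteq> all_edges V" using EV es(2) by (meson order.trans set_take_subset)
    moreover have "{u, v} \<notin> ?H" using distinct_nth_notin_take[OF es(1) i] uv(2) by simp
    moreover have "k - 1 \<le> card V - 2" using k by simp
    ultimately obtain X where "X \<subseteq> V - {u, v}" "card X = k - 1"
        "\<not> (adj (edges_avoiding ?H X))\<^sup>*\<^sup>* u v"
      using few_disjoint_paths_separator[OF finV _ uv(3,4,1)] few_paths[OF i uv(2,1)] by metis
    thus ?thesis
      using edge_in_M_if_separated[OF finV w _ _ uv(3,4,1)] lighter[OF i] uv(2) by metis
  qed
  hence "E \<subseteq> M k V w" using es(2) by (auto simp: in_set_conv_nth)
  with w show ?thesis by blast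
qed

theorem theorem5:
  fixes V :: "'a set" and k :: nat
  assumes "finite V" and "card V \<ge> 2" and "1 \<le> k" and "k \<le> card V - 1"
  shows "(\<forall>w. distinct_pos_weights V w \<longrightarrow> k_constructible k V (M k V w)) \<and>
         (\<forall>E. E \<subseteq> all_edges V \<and> k_constructible k V E \<longrightarrow>
              (\<exists>w. distinct_pos_weights V w \<and> E \<subseteq> M k V w))"
  using M_k_constructible[OF assms(1)] k_constructible_subset_M[OF assms(1,4)] by blast

end
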